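(* Let $0<b<1$. For every instance, the naive future-biased agent with bias $b$ incurs cost $C_f(s)\le \frac{1}{b}C_o(s)$; that is, its cost ratio is at most $1/b$.
   Context: An instance is a finite directed acyclic graph $G=(V,E)$ with nonnegative edge costs $c(u,v)$, start node $s$ and target node $t$, where $t$ is the unique node with no outgoing edges; $C_o(u)$ is the minimum cost of a $u$–$t$ path. The naive agent with bias $b$ (called future-biased when $b<1$): $C_f(t)=0$, and for $u\ne t$, $S_f(u)\in\arg\min_{v:(u,v)\in E}(b\,c(u,v)+C_o(v))$, $C_f(u)=c(u,S_f(u))+C_f(S_f(u))$; $C_f(s)$ is the cost it incurs traveling from $s$ to $t$, and its cost ratio is $C_f(s)/C_o(s)$. *)

theory Defs
  imports Complex_Main
begin

definition is_path :: "('a \<times> 'a) set \<Rightarrow> 'a \<Rightarrow> 'a \<Rightarrow> 'a list \<Rightarrow> bool" where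
  "is_path E u w xs \<longleftrightarrow> xs \<noteq> [] \<and> hd xs = u \<and> last xs = w \<and>
     (\<forall>i < length xs - 1. (xs ! i, xs ! Suc i) \<in> E)"

definition path_cost :: "('a \<Rightarrow> 'a \<Rightarrow> real) \<Rightarrow> 'a list \<Rightarrow> real" where
  "path_cost c xs = (\<Sum>i < length xs - 1. c (xs ! i) (xs ! Suc i))"

definition opt_cost :: "('a \<times> 'a) set \<Rightarrow> ('a \<Rightarrow> 'a \<Rightarrow> real) \<Rightarrow> 'a \<Rightarrow> 'a \<Rightarrow> real" where
  "opt_cost E c t u = Min {path_cost c xs | xs. is_path E u t xs}"

definition naive_choice :: "('a \<times> 'a) set \<Rightarrow> ('a \<Rightarrow> 'a \<Rightarrow> real) \<Rightarrow> 'a \<Rightarrow> real \<Rightarrow> 'a \<Rightarrow> 'a \<Rightarrow> bool" where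
  "naive_choice E c t b u v \<longleftrightarrow> (u, v) \<in> E \<and>
     (\<forall>w. (u, w) \<in> E \<longrightarrow> b * c u v + opt_cost E c t v \<le> b * c u w + opt_cost E c t w)"

text \<open>C_f(u): cost incurred by following the choice function S from u until t.
  C_f(t) = 0 and C_f(u) = c(u, S u) + C_f(S u).\<close>
definition agent_cost :: "('a \<Rightarrow> 'a \<Rightarrow> real) \<Rightarrow> ('a \<Rightarrow> 'a) \<Rightarrow> 'a \<Rightarrow> 'a \<Rightarrow> real" where
  "agent_cost c S t u =
     (let n = (LEAST n. (S ^^ n) u = t) in (\<Sum>i < n. c ((S ^^ i) u) ((S ^^ Suc i) u)))"

end

theory Submission
  imports Defs
begin

text \<open>The agent's cost satisfies \<open>b C\<^sub>f(u) \<le> C\<^sub>o(u)\<close> for every node, by well-founded induction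
  along the DAG. If \<open>w\<close> is the first node of an optimal \<open>u\<close>-\<open>t\<close> path and \<open>v = S(u)\<close>, then
  \<open>b C\<^sub>f(u) = b c(u,v) + b C\<^sub>f(v) \<le> b c(u,v) + C\<^sub>o(v) \<le> b c(u,w) + C\<^sub>o(w) \<le> c(u,w) + C\<^sub>o(w) = C\<^sub>o(u)\<close>,
  using the induction hypothesis, the agent's choice, \<open>b \<le> 1\<close> with \<open>c \<ge> 0\<close>, and Bellman's equation.\<close>

lemma is_path_Nil [simp]: "\<not> is_path E u w []"
  unfolding is_path_def by simp

lemma is_path_single [simp]: "is_path E u w [x] \<longleftrightarrow> x = u \<and> x = w"
  unfolding is_path_def by auto

lemma is_path_Cons2 [simp]:
  "is_path E u w (x # y # ys) \<longleftrightarrow> x = u \<and> (x, y) \<in> E \<and> is_path E y w (y # ys)"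
  unfolding is_path_def by (auto simp: All_less_Suc2)

lemma path_cost_single [simp]: "path_cost c [x] = 0"
  unfolding path_cost_def by simp

lemma path_cost_Cons2 [simp]: "path_cost c (x # y # ys) = c x y + path_cost c (y # ys)"
  unfolding path_cost_def by (simp only: length_Cons diff_Suc_1 sum.lessThan_Suc_shift nth_Cons_0 nth_Cons_Suc)

lemma is_path_rtrancl:
  assumes "is_path E u w xs" "x \<in> set xs"
  shows "(u, x) \<in> E\<^sup>*"
  using assms
proof (induction xs arbitrary: u rule: induct_list012)
  case (3 x' y zs)
  then show ?case by (auto intro: converse_rtrancl_into_rtrancl)
qed auto

lemma is_path_distinct:
  assumes "acyclic E" "is_path E u w xs"
  shows "distinct xs"
  using assms(2)
proof (induction xs arbitrary: u rule: induct_list012)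
  case (3 x y zs)
  then have "(u, y) \<in> E" "is_path E y w (y # zs)" "x = u" using "3.prems" by simp_all
  moreover have "(y, u) \<notin> E\<^sup>*"
    using \<open>(u, y) \<in> E\<close> assms(1) unfolding acyclic_def
    by (meson rtrancl_into_trancl2)
  ultimately show ?case using 3(2) is_path_rtrancl by fastforce
qed auto

lemma agent_cost_target [simp]: "agent_cost c S t t = 0"
  unfolding agent_cost_def by simp

lemma agent_cost_step:
  assumes "u \<noteq> t" and "(S ^^ n) (S u) = t"
  shows "agent_cost c S t u = c u (S u) + agent_cost c S t (S u)"
proof -
  have shift: "(S ^^ Suc m) u = (S ^^ m) (S u)" for m
    by (metis funpow_Suc_right comp_apply)
  have steps: "(LEAST m. (S ^^ m) u = t) = Suc (LEAST m. (S ^^ m) (S u) = t)"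
    using Least_Suc[of "\<lambda>m. (S ^^ m) u = t" "Suc n"] assms shift by simp
  show ?thesis
    unfolding agent_cost_def Let_def steps sum.lessThan_Suc_shift by (simp only: shift funpow_0)
qed

locale dag_instance =
  fixes V :: "'a set" and E :: "('a \<times> 'a) set" and t :: 'a
  assumes finite_V: "finite V"
    and edges_in_V: "E \<subseteq> V \<times> V"
    and acyclic_E: "acyclic E"
    and target_in_V: "t \<in> V"
    and sink_iff_target: "\<forall>u \<in> V. (\<forall>v. (u, v) \<notin> E) \<longleftrightarrow> u = t"
begin

lemma wf_converse_E: "wf (E\<inverse>)"
  using finite_acyclic_wf_converse acyclic_E finite_V edges_in_V
  by (meson finite_SigmaI finite_subset)

lemma target_no_edge: "(t, v) \<notin> E"
  using sink_iff_target target_in_V by auto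

lemma edge_target_in_V: "(u, v) \<in> E \<Longrightarrow> v \<in> V"
  using edges_in_V by auto

lemma is_path_set:
  assumes "is_path E u w xs" "u \<in> V"
  shows "set xs \<subseteq> V"
proof
  fix x assume "x \<in> set xs"
  with assms(1) have "(u, x) \<in> E\<^sup>*" by (rule is_path_rtrancl)
  then show "x \<in> V" using assms(2) by induction (auto dest: edge_target_in_V)
qed

lemma finite_paths:
  assumes "u \<in> V"
  shows "finite {xs. is_path E u w xs}"
proof (rule finite_subset)
  show "{xs. is_path E u w xs} \<subseteq> {xs. set xs \<subseteq> V \<and> length xs \<le> card V}"
  proof clarify
    fix xs assume path: "is_path E u w xs"
    have "set xs \<subseteq> V" using is_path_set[OF path assms] .
    moreover have "length xs = card (set xs)"
      using is_path_distinct[OF acyclic_E path] by (simp add: distinct_card)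
    ultimately show "set xs \<subseteq> V \<and> length xs \<le> card V"
      using finite_V by (simp add: card_mono)
  qed
  show "finite {xs. set xs \<subseteq> V \<and> length xs \<le> card V}"
    using finite_lists_length_le[OF finite_V] .
qed

lemma path_to_target_exists:
  assumes "u \<in> V"
  shows "\<exists>xs. is_path E u t xs"
  using assms
proof (induction u rule: wf_induct_rule[OF wf_converse_E])
  case (1 u)
  show ?case
  proof (cases "u = t")
    case False
    then obtain v where edge: "(u, v) \<in> E" using sink_iff_target 1(2) by auto
    then obtain ys where path: "is_path E v t ys" using 1 edge_target_in_V by blast
    then obtain ys' where "ys = v # ys'" unfolding is_path_def by (cases ys) auto
    then have "is_path E u t (u # ys)" using path edge by simp
    then show ?thesis by blast
  qed (metis is_path_single)
qed

lemma opt_cost_le: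
  assumes "u \<in> V" "is_path E u t xs"
  shows "opt_cost E c t u \<le> path_cost c xs"
  unfolding opt_cost_def using assms finite_paths[OF assms(1)] by (intro Min_le) auto

lemma opt_cost_attained:
  assumes "u \<in> V"
  obtains xs where "is_path E u t xs" "path_cost c xs = opt_cost E c t u"
proof -
  let ?A = "{path_cost c xs | xs. is_path E u t xs}"
  have "finite ?A"
    using finite_paths[OF assms] by (simp add: setcompr_eq_image)
  moreover have "?A \<noteq> {}" using path_to_target_exists[OF assms] by blast
  ultimately have "opt_cost E c t u \<in> ?A" unfolding opt_cost_def by (rule Min_in)
  then show ?thesis using that by auto
qed

lemma opt_cost_target: "opt_cost E c t t = 0"
proof (rule antisym)
  show "opt_cost E c t t \<le> 0"
    using opt_cost_le[OF target_in_V, of "[t]"] by simp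
  obtain xs where path: "is_path E t t xs" and cost: "path_cost c xs = opt_cost E c t t"
    using opt_cost_attained[OF target_in_V] .
  then have "xs = [t]"
    using target_no_edge by (cases xs rule: remdups_adj.cases) auto
  then show "0 \<le> opt_cost E c t t" using cost by simp
qed

lemma opt_cost_bellman:
  assumes "u \<in> V" "u \<noteq> t"
  obtains w where "(u, w) \<in> E" "c u w + opt_cost E c t w \<le> opt_cost E c t u"
proof -
  obtain xs where path: "is_path E u t xs" and cost: "path_cost c xs = opt_cost E c t u"
    using opt_cost_attained[OF assms(1)] .
  then obtain w zs where xs: "xs = u # w # zs"
    using assms(2) by (cases xs rule: remdups_adj.cases) auto
  then have edge: "(u, w) \<in> E" and tail: "is_path E w t (w # zs)" using path by simp_all
  have "opt_cost E c t w \<le> path_cost c (w # zs)"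
    using opt_cost_le[OF edge_target_in_V[OF edge] tail] .
  then show ?thesis using that edge cost xs by simp
qed

context
  fixes c :: "'a \<Rightarrow> 'a \<Rightarrow> real" and b :: real and S :: "'a \<Rightarrow> 'a"
  assumes naive: "\<forall>u \<in> V - {t}. naive_choice E c t b u (S u)"
begin

lemma naive_step_edge: "u \<in> V \<Longrightarrow> u \<noteq> t \<Longrightarrow> (u, S u) \<in> E"
  using naive unfolding naive_choice_def by auto

lemma naive_walk_reaches_target:
  assumes "u \<in> V"
  shows "\<exists>n. (S ^^ n) u = t"
  using assms
proof (induction u rule: wf_induct_rule[OF wf_converse_E])
  case (1 u)
  show ?case
  proof (cases "u = t")
    case False
    then have edge: "(u, S u) \<in> E" using naive_step_edge 1(2) by blast
    then obtain n where "(S ^^ n) (S u) = t" using 1 edge_target_in_V by blast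
    then have "(S ^^ Suc n) u = t" by (metis funpow_Suc_right comp_apply)
    then show ?thesis ..
  qed (metis funpow_0)
qed

lemma naive_agent_cost_bound:
  assumes nonneg: "\<forall>(u, v) \<in> E. c u v \<ge> 0" and "b \<le> 1" and "u \<in> V"
  shows "b * agent_cost c S t u \<le> opt_cost E c t u"
  using assms(3)
proof (induction u rule: wf_induct_rule[OF wf_converse_E])
  case (1 u)
  show ?case
  proof (cases "u = t")
    case True
    then show ?thesis by (simp add: opt_cost_target)
  next
    case False
    let ?v = "S u"
    have edge: "(u, ?v) \<in> E" using naive_step_edge 1(2) False by blast
    have IH: "b * agent_cost c S t ?v \<le> opt_cost E c t ?v"
      using 1 edge edge_target_in_V by blast
    obtain n where "(S ^^ n) ?v = t"
      using naive_walk_reaches_target edge_target_in_V[OF edge] by blast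
    then have agent: "agent_cost c S t u = c u ?v + agent_cost c S t ?v"
      by (rule agent_cost_step[OF False])
    obtain w where w: "(u, w) \<in> E" "c u w + opt_cost E c t w \<le> opt_cost E c t u"
      using opt_cost_bellman 1(2) False by blast
    have choice: "b * c u ?v + opt_cost E c t ?v \<le> b * c u w + opt_cost E c t w"
      using naive 1(2) False w(1) unfolding naive_choice_def by auto
    have "b * c u w \<le> c u w"
      using mult_right_mono[OF \<open>b \<le> 1\<close>, of "c u w"] nonneg w(1) by auto
    then show ?thesis using agent IH choice w(2) by (simp add: distrib_left)
  qed
qed

end

end

theorem claim7:
  fixes V :: "'a set" and E :: "('a \<times> 'a) set" and c :: "'a \<Rightarrow> 'a \<Rightarrow> real"
    and s t :: 'a and b :: real and S :: "'a \<Rightarrow> 'a"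
  assumes "finite V" and "E \<subseteq> V \<times> V" and "acyclic E"
    and "\<forall>(u, v) \<in> E. c u v \<ge> 0"
    and "s \<in> V" and "t \<in> V"
    and "\<forall>u \<in> V. (\<forall>v. (u, v) \<notin> E) \<longleftrightarrow> u = t"
    and "0 < b" and "b < 1"
    and "\<forall>u \<in> V - {t}. naive_choice E c t b u (S u)"
  shows "agent_cost c S t s \<le> (1 / b) * opt_cost E c t s"
proof -
  interpret dag_instance V E t
    using assms(1-3,6,7) by unfold_locales
  have "b * agent_cost c S t s \<le> opt_cost E c t s"
    using naive_agent_cost_bound[OF assms(10,4)] assms(5,9) by simp
  then show ?thesis using \<open>0 < b\<close> by (simp add: field_simps)
qed

end
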